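(* If $t\in[0,1/2]$, then $w(t,a)/W(t,a)\le \frac{68-5\sqrt{10}}{72}$ for all $a\in[(3t+2)/4,2]$.
   Context: For $(t,a)\in\mathbb R^2$ define $w_1(t,a)=(2t+3)a-(3t^2/4+t)$, $w_2(t,a)=(4t+4)a-(3t^2/2+2t+2)$, $w_3(t,a)=8ta-(3t^2+4t-4)$, $W(t,a)=[(t+2)a-(t^2/2+t)](t+2)$, and $w(t,a)=\min\{w_1(t,a),w_2(t,a),w_3(t,a)\}$. *)

theory Defs
  imports Complex_Main
begin

definition w1 :: "real \<Rightarrow> real \<Rightarrow> real" where
  "w1 t a = (2*t + 3) * a - (3*t^2/4 + t)"

definition w2 :: "real \<Rightarrow> real \<Rightarrow> real" where
  "w2 t a = (4*t + 4) * a - (3*t^2/2 + 2*t + 2)"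

definition w3 :: "real \<Rightarrow> real \<Rightarrow> real" where
  "w3 t a = 8*t*a - (3*t^2 + 4*t - 4)"

definition W :: "real \<Rightarrow> real \<Rightarrow> real" where
  "W t a = ((t + 2) * a - (t^2/2 + t)) * (t + 2)"

definition w :: "real \<Rightarrow> real \<Rightarrow> real" where
  "w t a = min (w1 t a) (min (w2 t a) (w3 t a))"

end

theory Submission
  imports Defs
begin

(* Let c = (68 - 5 sqrt 10)/72.  For fixed t every excess w_i t a - c W t a is affine in a.
   At a = 5/3 the differences w1 - w2 and w2 - w3 are (9t^2 - 28t + 4)/12 and /6, so the three
   lines meet there exactly when t is the root t_crit = (14 - 4 sqrt 10)/9, and c is the value
   of w/W at that point.  For t <= t_crit the increasing piece w2 and the decreasing piece w3
   suffice, for t >= t_crit the pieces w1 and w2: the combination of the two excesses, weighted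
   by the opposite slopes, does not depend on a, and it is a polynomial in t vanishing at t_crit
   whose cofactor has constant sign on the relevant range. *)

definition ratio_bound :: real where
  "ratio_bound = (68 - 5 * sqrt 10) / 72"

definition t_crit :: real where
  "t_crit = (14 - 4 * sqrt 10) / 9"

lemma sqrt10_bounds: "3162/1000 < sqrt (10::real)" "sqrt (10::real) < 3163/1000"
  by (rule real_less_rsqrt real_less_lsqrt; simp add: power2_eq_square)+

lemma sqrt10_mult_self: "sqrt 10 * (sqrt 10 * x) = 10 * (x::real)"
  by (simp add: mult.assoc[symmetric])

lemma ratio_bound_bounds: "7247/10000 < ratio_bound" "ratio_bound < 7249/10000"
  using sqrt10_bounds by (auto simp: ratio_bound_def)

lemma t_crit_bounds: "1497/10000 < t_crit" "t_crit < 1503/10000"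
  using sqrt10_bounds by (auto simp: t_crit_def)

lemma W_pos:
  assumes "-2 < t" and "(3*t + 2)/4 \<le> a"
  shows "0 < W t a"
proof -
  have "(t + 2) * a - (t^2/2 + t) = (t + 2) * (a - (3*t + 2)/4) + (t + 2)^2/4"
    by (simp add: algebra_simps power2_eq_square)
  also have "\<dots> > 0"
    using assms by (intro add_nonneg_pos mult_nonneg_nonneg) auto
  finally show ?thesis
    using assms(1) by (simp add: W_def)
qed

lemma min_affine_nonpos:
  fixes \<alpha> \<beta> f\<^sub>0 g\<^sub>0 x x\<^sub>0 :: real
  assumes "\<alpha> \<le> 0" and "0 \<le> \<beta>" and "\<alpha> < \<beta>" and "\<beta> * f\<^sub>0 - \<alpha> * g\<^sub>0 \<le> 0"
  shows "min (f\<^sub>0 + \<alpha> * (x - x\<^sub>0)) (g\<^sub>0 + \<beta> * (x - x\<^sub>0)) \<le> 0"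
proof (rule ccontr)
  define f g where "f = f\<^sub>0 + \<alpha> * (x - x\<^sub>0)" and "g = g\<^sub>0 + \<beta> * (x - x\<^sub>0)"
  assume "\<not> min f g \<le> 0"
  then have "0 < f" "0 < g" by auto
  have "0 < \<beta> * f + (- \<alpha>) * g"
  proof (cases "0 < \<beta>")
    case True
    have "0 < \<beta> * f" and "0 \<le> - \<alpha> * g"
      using True \<open>0 < f\<close> \<open>0 < g\<close> assms(1) by (simp_all add: mult_nonpos_nonneg)
    then show ?thesis
      by simp
  next
    case False
    then have "0 < - \<alpha>"
      using assms(2,3) by simp
    then have "0 \<le> \<beta> * f" and "0 < - \<alpha> * g"
      using \<open>0 < f\<close> \<open>0 < g\<close> assms(2) by (simp_all add: mult_neg_pos)
    then show ?thesis
      by simp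
  qed
  also have "\<beta> * f + (- \<alpha>) * g = \<beta> * f\<^sub>0 - \<alpha> * g\<^sub>0"
    by (simp add: f_def g_def algebra_simps)
  finally show False
    using assms(4) by simp
qed

lemma w_excess_affine:
  fixes c t a x :: real
  shows "w1 t a - c * W t a = (w1 t x - c * W t x) + (2*t + 3 - c * (t + 2)^2) * (a - x)"
    and "w2 t a - c * W t a = (w2 t x - c * W t x) + (4*t + 4 - c * (t + 2)^2) * (a - x)"
    and "w3 t a - c * W t a = (w3 t x - c * W t x) + (8*t - c * (t + 2)^2) * (a - x)"
  by (simp_all add: w1_def w2_def w3_def W_def algebra_simps power2_eq_square)

lemma ratio_bound_mult_square_ge:
  "4 * (ratio_bound * t) + 4 * ratio_bound \<le> ratio_bound * (t + 2)^2"
proof -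
  have "ratio_bound * (4*t + 4) \<le> ratio_bound * (t + 2)^2"
    using ratio_bound_bounds by (intro mult_left_mono) (auto simp: power2_eq_square algebra_simps)
  then show ?thesis
    by (simp add: algebra_simps)
qed

lemma w1_slope_nonpos:
  assumes "1/8 \<le> t"
  shows "2*t + 3 - ratio_bound * (t + 2)^2 \<le> 0"
proof -
  have "(7247/10000) * t \<le> ratio_bound * t"
    using ratio_bound_bounds assms by (intro mult_right_mono) auto
  then show ?thesis
    using ratio_bound_mult_square_ge[of t] ratio_bound_bounds assms by linarith
qed

lemma w2_slope_pos:
  assumes "0 \<le> t" and "t \<le> 1/2"
  shows "0 < 4*t + 4 - ratio_bound * (t + 2)^2"
proof -
  have "t^2 \<le> t/2"
    using assms mult_left_mono[of t "1/2" t] by (simp add: power2_eq_square)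
  then have "ratio_bound * (t + 2)^2 \<le> ratio_bound * (9/2 * t + 4)"
    using ratio_bound_bounds by (intro mult_left_mono) (auto simp: power2_eq_square algebra_simps)
  moreover have "ratio_bound * t \<le> (7249/10000) * t"
    using ratio_bound_bounds assms by (intro mult_right_mono) auto
  ultimately show ?thesis
    using ratio_bound_bounds assms by (simp add: algebra_simps)
qed

lemma w3_slope_neg:
  assumes "0 \<le> t" and "t \<le> 1/2"
  shows "8*t - ratio_bound * (t + 2)^2 < 0"
proof -
  have "(7247/10000) * t \<le> ratio_bound * t"
    using ratio_bound_bounds assms by (intro mult_right_mono) auto
  then show ?thesis
    using ratio_bound_mult_square_ge[of t] ratio_bound_bounds assms by linarith
qed

lemma t_crit_quadratic_nonneg:
  assumes "t \<le> t_crit"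
  shows "0 \<le> 9*t^2 - 28*t + 4"
proof -
  have "9*t^2 - 28*t + 4 = 9 * (t - t_crit) * (t - (14 + 4 * sqrt 10)/9)"
    by (simp add: t_crit_def field_simps power2_eq_square sqrt10_mult_self)
  moreover have "t - (14 + 4 * sqrt 10)/9 \<le> 0"
    using assms t_crit_bounds by (simp add: t_crit_def)
  ultimately show ?thesis
    using assms by (simp add: mult_nonpos_nonpos)
qed

lemma w2_excess_at_5_3_nonpos:
  assumes "0 \<le> t" and "t \<le> t_crit"
  shows "w2 t (5/3) - ratio_bound * W t (5/3) \<le> 0"
proof -
  define Q where "Q = (58/9 + sqrt 10/18) - (16/9 + 31 * sqrt 10/18) * t + (17/6 - 5 * sqrt 10/24) * t^2"
  have "6 * (w2 t (5/3) - ratio_bound * W t (5/3)) = (t - t_crit) * Q"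
    by (simp add: Q_def w2_def W_def ratio_bound_def t_crit_def field_simps power2_eq_square
        sqrt10_mult_self)
  moreover have "0 < Q"
  proof -
    have "(16/9 + 31 * sqrt 10/18) * t \<le> 8 * t"
      using sqrt10_bounds assms(1) by (intro mult_right_mono) auto
    moreover have "0 \<le> (17/6 - 5 * sqrt 10/24) * t^2"
      using sqrt10_bounds by simp
    ultimately show ?thesis
      using sqrt10_bounds t_crit_bounds assms unfolding Q_def by linarith
  qed
  ultimately have "6 * (w2 t (5/3) - ratio_bound * W t (5/3)) \<le> 0"
    using assms(2) by (simp add: mult_nonpos_nonneg)
  then show ?thesis
    by simp
qed

lemma w2_w3_crossing_nonpos:
  assumes "0 \<le> t" and "t \<le> t_crit"
  shows "(4*t + 4 - ratio_bound * (t + 2)^2) * (w3 t (5/3) - ratio_bound * W t (5/3))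
       - (8*t - ratio_bound * (t + 2)^2) * (w2 t (5/3) - ratio_bound * W t (5/3)) \<le> 0"
proof -
  have "(4*t + 4 - ratio_bound * (t + 2)^2) * (w3 t (5/3) - ratio_bound * W t (5/3))
       - (8*t - ratio_bound * (t + 2)^2) * (w2 t (5/3) - ratio_bound * W t (5/3))
     = (4 - 4*t) * (w2 t (5/3) - ratio_bound * W t (5/3))
       - (4*t + 4 - ratio_bound * (t + 2)^2) * (9*t^2 - 28*t + 4) / 6"
    unfolding w2_def w3_def by (simp add: field_simps power2_eq_square)
  also have "\<dots> \<le> 0"
  proof -
    have "(4 - 4*t) * (w2 t (5/3) - ratio_bound * W t (5/3)) \<le> 0"
      using assms t_crit_bounds w2_excess_at_5_3_nonpos[OF assms] by (intro mult_nonneg_nonpos) auto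
    moreover have "0 \<le> (4*t + 4 - ratio_bound * (t + 2)^2) * (9*t^2 - 28*t + 4) / 6"
      using assms t_crit_bounds w2_slope_pos[of t] t_crit_quadratic_nonneg[OF assms(2)] by simp
    ultimately show ?thesis
      by linarith
  qed
  finally show ?thesis .
qed

lemma w1_w2_crossing_nonpos:
  assumes "t_crit \<le> t" and "t \<le> 1/2"
  shows "(4*t + 4 - ratio_bound * (t + 2)^2) * (w1 t (5/3) - ratio_bound * W t (5/3))
       - (2*t + 3 - ratio_bound * (t + 2)^2) * (w2 t (5/3) - ratio_bound * W t (5/3)) \<le> 0"
proof -
  define P where "P = (-1/9 - 7 * sqrt 10/18) + (5/6 - 11 * sqrt 10/24) * t
    + (11/12 - sqrt 10/6) * t^2 + (17/72 - 5 * sqrt 10/288) * t^3"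
  have "(4*t + 4 - ratio_bound * (t + 2)^2) * (w1 t (5/3) - ratio_bound * W t (5/3))
       - (2*t + 3 - ratio_bound * (t + 2)^2) * (w2 t (5/3) - ratio_bound * W t (5/3))
     = (t - t_crit) * P"
    by (simp add: P_def w1_def w2_def W_def ratio_bound_def t_crit_def field_simps
        power2_eq_square power3_eq_cube sqrt10_mult_self)
  moreover have "P < 0"
  proof -
    have t: "0 \<le> t" using assms t_crit_bounds by simp
    have t2: "t^2 \<le> 1/4"
      using power_mono[OF assms(2) t, of 2] by (simp add: power2_eq_square)
    have t3: "t^3 \<le> 1/8"
      using power_mono[OF assms(2) t, of 3] by (simp add: power3_eq_cube)
    have "(5/6 - 11 * sqrt 10/24) * t \<le> 0"
      using sqrt10_bounds t by (intro mult_nonpos_nonneg) auto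
    moreover have "(11/12 - sqrt 10/6) * t^2 \<le> (11/12 - sqrt 10/6) * (1/4)"
      using sqrt10_bounds t2 by (intro mult_left_mono) auto
    moreover have "(17/72 - 5 * sqrt 10/288) * t^3 \<le> (17/72 - 5 * sqrt 10/288) * (1/8)"
      using sqrt10_bounds t3 by (intro mult_left_mono) auto
    ultimately show ?thesis
      using sqrt10_bounds unfolding P_def by (simp add: algebra_simps)
  qed
  ultimately show ?thesis
    using assms(1) by (simp add: mult_nonneg_nonpos)
qed

theorem lemmaA8:
  fixes t a :: real
  assumes "0 \<le> t" and "t \<le> 1/2"
    and "(3*t + 2)/4 \<le> a" and "a \<le> 2"
  shows "w t a / W t a \<le> (68 - 5 * sqrt 10) / 72"
proof -
  have "w t a \<le> ratio_bound * W t a"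
  proof (cases "t \<le> t_crit")
    case True
    have "min (w3 t a - ratio_bound * W t a) (w2 t a - ratio_bound * W t a) \<le> 0"
      unfolding w_excess_affine(2,3)[where c = ratio_bound and t = t and a = a and x = "5/3"]
      using w3_slope_neg[OF assms(1,2)] w2_slope_pos[OF assms(1,2)]
        w2_w3_crossing_nonpos[OF assms(1) True]
      by (intro min_affine_nonpos) auto
    then show ?thesis by (auto simp: w_def)
  next
    case False
    have "min (w1 t a - ratio_bound * W t a) (w2 t a - ratio_bound * W t a) \<le> 0"
      unfolding w_excess_affine(1,2)[where c = ratio_bound and t = t and a = a and x = "5/3"]
      using False t_crit_bounds w1_slope_nonpos[of t] w2_slope_pos[OF assms(1,2)]
        w1_w2_crossing_nonpos[of t] assms(2)
      by (intro min_affine_nonpos) auto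
    then show ?thesis by (auto simp: w_def)
  qed
  moreover have "0 < W t a"
    using assms by (intro W_pos) auto
  ultimately show ?thesis
    by (simp add: ratio_bound_def pos_divide_le_eq mult.commute)
qed

end
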